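(* Let $L\in\mathbb Z^+$ and let $\mathcal C$ be a linear $[n,k]$ MDS code over $F$ with $k<n$ and $k/n\ge 1-\frac1L$; let $H$ be an $(n-k)\times n$ parity-check matrix of $\mathcal C$. Then $\mathcal C$ is lightly-$L$-MDS if and only if $\det\big(M_{J_0,J_1,\dots,J_L}(H)\big)\neq0$ for every collection of $L+1$ pairwise disjoint subsets $J_0,J_1,\dots,J_L\subseteq\{1,\dots,n\}$ satisfying (S1) $|J_m|\le n-k$ for all $m\in\{0,\dots,L\}$, and (S2) $\sum_{m=0}^{L}|J_m|=L(n-k)$.
   Context: $F=\mathrm{GF}(q)$; $\mathsf w(\cdot)$ is Hamming weight. For a matrix $H$ with columns indexed by $\{1,\dots,n\}$ and $J\subseteq\{1,\dots,n\}$, $(H)_J$ denotes the submatrix of columns indexed by $J$. For subsets $J_0,\dots,J_L$, $M_{J_0,\dots,J_L}(H)$ is the block matrix with $L$ block rows and $L+1$ block columns, whose $m$-th block row ($m=1,\dots,L$) is $\big(-(H)_{J_0}\ \big|\ 0\ \cdots\ 0\ \big|\ (H)_{J_m}\ \big|\ 0\cdots 0\big)$, i.e., the first block column is $-(H)_{J_0}$ in every block row, and the block in block row $m$ and block column $m$ (block columns numbered $0,\dots,L$) is $(H)_{J_m}$, all other blocks being zero. Under (S2) it is square of order $L(n-k)$. A linear $[n,k,d]$ code $\mathcal C$ is lightly-$(\tau,L)$-list decodable ($L\in\mathbb Z^+$, nonnegative $\tau\in\frac{1}{L+1}\mathbb Z$) if there do not exist $L+1$ nonzero vectors $e_0,\dots,e_L\in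 F^n$, each of Hamming weight at most $d-1$, all in the same coset of $\mathcal C$, with pairwise disjoint supports and $\sum_{m=0}^L\mathsf w(e_m)\le(L+1)\tau$. The code is lightly-$L$-MDS if it is lightly-$\left(\frac{L(n-k)}{L+1},L\right)$-list decodable. *)

theory Defs
  imports "Jordan_Normal_Form.DL_Rank" "Jordan_Normal_Form.Determinant"
begin

(* Vectors of length n over a finite field 'a; coordinates indexed 0..n-1
   (the paper's 1..n shifted by one). *)

definition supp :: "nat \<Rightarrow> 'a::zero vec \<Rightarrow> nat set" where
  "supp n v = {i. i < n \<and> v $ i \<noteq> 0}"

definition hweight :: "nat \<Rightarrow> 'a::zero vec \<Rightarrow> nat" where
  "hweight n v = card (supp n v)"

definition code_of :: "nat \<Rightarrow> 'a::field mat \<Rightarrow> 'a vec set" where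
  "code_of n H = {c \<in> carrier_vec n. H *\<^sub>v c = 0\<^sub>v (dim_row H)}"

definition min_dist :: "nat \<Rightarrow> 'a::field vec set \<Rightarrow> nat" where
  "min_dist n C = Min {hweight n c | c. c \<in> C \<and> c \<noteq> 0\<^sub>v n}"

definition parity_check :: "nat \<Rightarrow> nat \<Rightarrow> 'a::field mat \<Rightarrow> 'a vec set \<Rightarrow> bool" where
  "parity_check n k H C \<longleftrightarrow> k \<le> n \<and> H \<in> carrier_mat (n - k) n
     \<and> vec_space.rank (n - k) H = n - k \<and> C = code_of n H"

definition is_MDS :: "nat \<Rightarrow> nat \<Rightarrow> 'a::field vec set \<Rightarrow> bool" where
  "is_MDS n k C \<longleftrightarrow> min_dist n C = n - k + 1"

definition lightly_list_decodable ::
  "nat \<Rightarrow> 'a::field vec set \<Rightarrow> real \<Rightarrow> nat \<Rightarrow> bool" where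
  "lightly_list_decodable n C \<tau> L \<longleftrightarrow>
     \<not> (\<exists>e :: nat \<Rightarrow> 'a vec.
          (\<forall>m\<le>L. e m \<in> carrier_vec n \<and> e m \<noteq> 0\<^sub>v n
                  \<and> hweight n (e m) \<le> min_dist n C - 1
                  \<and> e m - e 0 \<in> C)
        \<and> (\<forall>m\<le>L. \<forall>m'\<le>L. m \<noteq> m' \<longrightarrow> supp n (e m) \<inter> supp n (e m') = {})
        \<and> real (\<Sum>m\<le>L. hweight n (e m)) \<le> real (L + 1) * \<tau>)"

definition lightly_L_MDS :: "nat \<Rightarrow> nat \<Rightarrow> 'a::field vec set \<Rightarrow> nat \<Rightarrow> bool" where
  "lightly_L_MDS n k C L \<longleftrightarrow>
     lightly_list_decodable n C (real L * real (n - k) / real (L + 1)) L"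

definition blk_off :: "(nat \<Rightarrow> nat set) \<Rightarrow> nat \<Rightarrow> nat" where
  "blk_off J m = (\<Sum>t<m. card (J t))"

definition col_sub :: "'a mat \<Rightarrow> nat set \<Rightarrow> 'a mat" where
  "col_sub H J = mat (dim_row H) (card J) (\<lambda>(i, j). H $$ (i, sorted_list_of_set J ! j))"

(* M_{J_0,...,J_L}(H): L block rows (each of height r = dim_row H), L+1 block columns;
   block row m (m = 1..L) is ( -(H)_{J_0} | 0 ... 0 | (H)_{J_m} | 0 ... 0 ) *)
definition M_mat :: "'a::field mat \<Rightarrow> nat \<Rightarrow> (nat \<Rightarrow> nat set) \<Rightarrow> 'a mat" where
  "M_mat H L J = (let r = dim_row H in
     mat (L * r) (blk_off J (Suc L))
       (\<lambda>(a, c). let m = a div r + 1; i = a mod r in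
          if c < blk_off J 1 then - (col_sub H (J 0) $$ (i, c))
          else if blk_off J m \<le> c \<and> c < blk_off J (Suc m)
               then col_sub H (J m) $$ (i, c - blk_off J m)
          else 0))"

end

theory Submission
  imports Defs
begin

text \<open>
A vector \<open>x\<close> with \<open>\<Sum>\<^sub>m |J\<^sub>m|\<close> entries is the same thing as a family \<open>e\<^sub>0, \<dots>, e\<^sub>L\<close> of
vectors of \<open>F\<^sup>n\<close> with \<open>supp e\<^sub>m \<subseteq> J\<^sub>m\<close>: block \<open>m\<close> of \<open>x\<close> lists the entries of \<open>e\<^sub>m\<close> on \<open>J\<^sub>m\<close>.
Under this correspondence \<open>M\<^sub>J(H) x = 0\<close> says exactly that \<open>H e\<^sub>m = H e\<^sub>0\<close> for all \<open>m\<close>, i.e.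
that the \<open>e\<^sub>m\<close> lie in one coset of \<open>\<C>\<close>. A singular \<open>M\<^sub>J(H)\<close> thus yields \<open>L + 1\<close> vectors of
weight at most \<open>n - k < d\<close> with disjoint supports, total weight at most \<open>L(n - k)\<close>, and
not all zero; since a difference of two of them is a codeword of weight below \<open>d\<close>, none of
them is zero. Conversely, the supports of such a list can be enlarged to sets \<open>J\<^sub>m\<close> satisfying
(S1) and (S2), which needs \<open>L(n - k) \<le> n\<close>, i.e. the rate condition, and the list then
gives a nonzero kernel vector of \<open>M\<^sub>J(H)\<close>.
\<close>

lemma blk_off_0 [simp]: "blk_off J 0 = 0"
  by (simp add: blk_off_def)

lemma blk_off_Suc: "blk_off J (Suc m) = blk_off J m + card (J m)"
  by (simp add: blk_off_def)

lemma blk_off_Suc_eq_sum: "blk_off J (Suc L) = (\<Sum>m\<le>L. card (J m))"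
  by (simp add: blk_off_def lessThan_Suc_atMost)

lemma blk_off_mono: "m \<le> m' \<Longrightarrow> blk_off J m \<le> blk_off J m'"
  unfolding blk_off_def by (rule sum_mono2) auto

lemma exists_block_containing:
  "c < blk_off J K \<Longrightarrow> \<exists>m<K. blk_off J m \<le> c \<and> c < blk_off J (Suc m)"
proof (induction K)
  case (Suc K)
  then show ?case
    by (cases "c < blk_off J K") (auto intro: less_SucI)
qed simp

subsection \<open>Scattering blocks of a vector onto column sets\<close>

text \<open>\<open>unpack n J off x\<close> is the vector of \<open>F\<^sup>n\<close> supported on \<open>J\<close> whose entries on \<open>J\<close>, in increasing
  order, are \<open>x $ off, x $ (off + 1), \<dots>\<close>; this is how \<open>col_sub\<close> picks columns.\<close>

definition unpack :: "nat \<Rightarrow> nat set \<Rightarrow> nat \<Rightarrow> 'a::zero vec \<Rightarrow> 'a vec" where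
  "unpack n J off x = vec n (\<lambda>j. if j \<in> J
     then x $ (off + inv_into {..<card J} ((!) (sorted_list_of_set J)) j) else 0)"

lemma bij_betw_sorted_list_of_set_nth:
  "finite J \<Longrightarrow> bij_betw ((!) (sorted_list_of_set J)) {..<card J} J"
  by (rule bij_betw_nth) auto

lemma sorted_list_of_set_nth_exists:
  "finite J \<Longrightarrow> j \<in> J \<Longrightarrow> \<exists>t<card J. sorted_list_of_set J ! t = j"
  by (metis in_set_conv_nth length_sorted_list_of_set set_sorted_list_of_set)

lemma unpack_carrier [simp]: "unpack n J off x \<in> carrier_vec n"
  by (simp add: unpack_def)

lemma unpack_nth_sorted:
  assumes "J \<subseteq> {0..<n}" "t < card J"
  shows "sorted_list_of_set J ! t \<in> J"
    and "unpack n J off x $ (sorted_list_of_set J ! t) = x $ (off + t)"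
proof -
  have b: "bij_betw ((!) (sorted_list_of_set J)) {..<card J} J"
    using assms(1) by (intro bij_betw_sorted_list_of_set_nth) (auto intro: finite_subset)
  show j: "sorted_list_of_set J ! t \<in> J"
    using b assms(2) bij_betwE by blast
  then show "unpack n J off x $ (sorted_list_of_set J ! t) = x $ (off + t)"
    using b assms by (auto simp: unpack_def bij_betw_def inv_into_f_f)
qed

lemma supp_subset: "supp n v \<subseteq> {0..<n}"
  by (auto simp: supp_def)

lemma supp_unpack: "J \<subseteq> {0..<n} \<Longrightarrow> supp n (unpack n J off x) \<subseteq> J"
  by (auto simp: supp_def unpack_def split: if_splits)

lemma hweight_unpack_le: "J \<subseteq> {0..<n} \<Longrightarrow> hweight n (unpack n J off x) \<le> card J"
  unfolding hweight_def by (intro card_mono supp_unpack) (auto intro: finite_subset)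

lemma mult_mat_vec_unpack_nth:
  assumes H: "H \<in> carrier_mat r n" and J: "J \<subseteq> {0..<n}" and i: "i < r"
  shows "(H *\<^sub>v unpack n J off x) $ i
    = (\<Sum>t<card J. H $$ (i, sorted_list_of_set J ! t) * x $ (off + t))"
proof -
  let ?s = "(!) (sorted_list_of_set J)"
  have b: "bij_betw ?s {..<card J} J"
    using J by (intro bij_betw_sorted_list_of_set_nth) (auto intro: finite_subset)
  have "(H *\<^sub>v unpack n J off x) $ i = (\<Sum>j<n. H $$ (i, j) * unpack n J off x $ j)"
    using H i by (simp add: scalar_prod_def unpack_def atLeast0LessThan)
  also have "\<dots> = (\<Sum>j\<in>J. H $$ (i, j) * unpack n J off x $ j)"
    using J by (intro sum.mono_neutral_right) (auto simp: unpack_def)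
  also have "\<dots> = (\<Sum>t<card J. H $$ (i, ?s t) * unpack n J off x $ ?s t)"
    by (rule sum.reindex_bij_betw[OF b, symmetric])
  also have "\<dots> = (\<Sum>t<card J. H $$ (i, ?s t) * x $ (off + t))"
    using J by (intro sum.cong) (auto simp: unpack_nth_sorted)
  finally show ?thesis .
qed

definition pack :: "nat \<Rightarrow> (nat \<Rightarrow> nat set) \<Rightarrow> (nat \<Rightarrow> 'a::comm_monoid_add vec) \<Rightarrow> 'a vec" where
  "pack L J e = vec (blk_off J (Suc L)) (\<lambda>c. \<Sum>m\<le>L.
     if blk_off J m \<le> c \<and> c < blk_off J (Suc m)
     then e m $ (sorted_list_of_set (J m) ! (c - blk_off J m)) else 0)"

lemma pack_carrier [simp]: "pack L J e \<in> carrier_vec (blk_off J (Suc L))"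
  by (simp add: pack_def)

lemma pack_nth:
  assumes "m \<le> L" "t < card (J m)"
  shows "pack L J e $ (blk_off J m + t) = e m $ (sorted_list_of_set (J m) ! t)"
proof -
  let ?c = "blk_off J m + t"
  have c: "?c < blk_off J (Suc m)"
    using assms by (simp add: blk_off_Suc)
  have other_blocks: "\<not> (blk_off J m' \<le> ?c \<and> ?c < blk_off J (Suc m'))" if "m' \<noteq> m" for m'
    using that c blk_off_mono[of "Suc m'" m J] blk_off_mono[of "Suc m" m' J]
    by (cases "m' < m") auto
  have "?c < blk_off J (Suc L)"
    using c blk_off_mono[of "Suc m" "Suc L" J] assms by simp
  then have "pack L J e $ ?c = (\<Sum>m'\<le>L. if blk_off J m' \<le> ?c \<and> ?c < blk_off J (Suc m')
      then e m' $ (sorted_list_of_set (J m') ! (?c - blk_off J m')) else 0)"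
    by (simp add: pack_def)
  also have "\<dots> = (\<Sum>m'\<le>L. if m' = m then e m $ (sorted_list_of_set (J m) ! t) else 0)"
    using c other_blocks by (intro sum.cong) auto
  finally show ?thesis
    using assms by simp
qed

lemma unpack_pack:
  assumes "m \<le> L" "J m \<subseteq> {0..<n}" "e m \<in> carrier_vec n" "supp n (e m) \<subseteq> J m"
  shows "unpack n (J m) (blk_off J m) (pack L J e) = e m"
proof (rule eq_vecI)
  fix j assume "j < dim_vec (e m)"
  then have j: "j < n"
    using assms by simp
  show "unpack n (J m) (blk_off J m) (pack L J e) $ j = e m $ j"
  proof (cases "j \<in> J m")
    case True
    obtain t where "t < card (J m)" "j = sorted_list_of_set (J m) ! t"
      using True assms(2) sorted_list_of_set_nth_exists[of "J m" j]
      by (metis finite_atLeastLessThan finite_subset)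
    then show ?thesis
      using assms unpack_nth_sorted(2)[OF assms(2)] pack_nth by metis
  next
    case False
    then show ?thesis
      using assms(4) j by (auto simp: supp_def unpack_def)
  qed
qed (use assms in simp)

lemma eq_0_iff_unpack_blocks_eq_0:
  assumes J: "\<forall>m\<le>L. J m \<subseteq> {0..<n}" and x: "x \<in> carrier_vec (blk_off J (Suc L))"
  shows "x = 0\<^sub>v (blk_off J (Suc L)) \<longleftrightarrow> (\<forall>m\<le>L. unpack n (J m) (blk_off J m) x = 0\<^sub>v n)"
proof
  assume x0: "x = 0\<^sub>v (blk_off J (Suc L))"
  show "\<forall>m\<le>L. unpack n (J m) (blk_off J m) x = 0\<^sub>v n"
  proof (intro allI impI eq_vecI)
    fix m j assume m: "m \<le> L" and "j < dim_vec (0\<^sub>v n :: 'a vec)"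
    have in_range: "blk_off J m + t < blk_off J (Suc L)" if "t < card (J m)" for t
      using that blk_off_mono[of "Suc m" "Suc L" J] m by (simp add: blk_off_Suc)
    show "unpack n (J m) (blk_off J m) x $ j = 0\<^sub>v n $ j"
    proof (cases "j \<in> J m")
      case True
      then obtain t where t: "t < card (J m)" "sorted_list_of_set (J m) ! t = j"
        using sorted_list_of_set_nth_exists[of "J m" j] J m
        by (metis finite_atLeastLessThan finite_subset)
      then show ?thesis
        using unpack_nth_sorted(2)[of "J m" n t "blk_off J m" x] in_range[OF t(1)] x0 J m \<open>j < _\<close>
        by simp
    qed (use \<open>j < _\<close> in \<open>simp add: unpack_def\<close>)
  qed simp
next
  assume blocks: "\<forall>m\<le>L. unpack n (J m) (blk_off J m) x = 0\<^sub>v n"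
  show "x = 0\<^sub>v (blk_off J (Suc L))"
  proof (rule eq_vecI)
    fix c assume c: "c < dim_vec (0\<^sub>v (blk_off J (Suc L)) :: 'a vec)"
    then obtain m where m: "m \<le> L" "blk_off J m \<le> c" "c < blk_off J (Suc m)"
      using exists_block_containing[of c J "Suc L"] by (auto simp: less_Suc_eq_le)
    define t where "t = c - blk_off J m"
    have t: "t < card (J m)" "c = blk_off J m + t"
      using m by (simp_all add: t_def blk_off_Suc)
    have "sorted_list_of_set (J m) ! t \<in> J m"
      using unpack_nth_sorted(1)[of "J m" n t] J m t by simp
    moreover have "J m \<subseteq> {0..<n}"
      using J m by simp
    ultimately have "sorted_list_of_set (J m) ! t < n"
      by auto
    then show "x $ c = 0\<^sub>v (blk_off J (Suc L)) $ c"
      using unpack_nth_sorted(2)[of "J m" n t "blk_off J m" x] blocks J m t c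
      by (metis index_zero_vec(1) index_zero_vec(2))
  qed (use x in simp)
qed

subsection \<open>The kernel of \<open>M_mat\<close>\<close>

lemma M_mat_carrier:
  "H \<in> carrier_mat r n \<Longrightarrow> M_mat H L J \<in> carrier_mat (L * r) (blk_off J (Suc L))"
  by (simp add: M_mat_def)

lemma M_mat_mult_vec_nth:
  assumes H: "H \<in> carrier_mat r n" and J: "\<forall>m\<le>L. J m \<subseteq> {0..<n}"
    and x: "x \<in> carrier_vec (blk_off J (Suc L))" and a: "a < L * r"
  defines "m \<equiv> a div r + 1" and "i \<equiv> a mod r"
  shows "(M_mat H L J *\<^sub>v x) $ a
    = (H *\<^sub>v unpack n (J m) (blk_off J m) x) $ i - (H *\<^sub>v unpack n (J 0) 0 x) $ i"
proof -
  define N where "N = blk_off J (Suc L)"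
  define s0 where "s0 = sorted_list_of_set (J 0)"
  define sm where "sm = sorted_list_of_set (J m)"
  have r: "r > 0"
    using a by (cases r) auto
  have i: "i < r"
    using r by (simp add: i_def)
  have mL: "1 \<le> m" "m \<le> L"
    using a r by (auto simp: m_def less_mult_imp_div_less Suc_le_eq)
  have off1: "blk_off J 1 = card (J 0)" "blk_off J 1 \<le> blk_off J m"
    using mL blk_off_mono[of 1 m J] by (simp_all add: blk_off_Suc[of J 0, simplified])
  have offN: "blk_off J m \<le> blk_off J (Suc m)" "blk_off J (Suc m) \<le> N"
    using mL blk_off_mono by (auto simp: N_def)
  have "(M_mat H L J *\<^sub>v x) $ a = (\<Sum>c<N. M_mat H L J $$ (a, c) * x $ c)"
    using a x H by (simp add: scalar_prod_def M_mat_def N_def atLeast0LessThan)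
  also have "\<dots> = (\<Sum>c<N. (if c < card (J 0) then - (H $$ (i, s0 ! c) * x $ c) else 0)
      + (if c \<in> {blk_off J m..<blk_off J (Suc m)}
         then H $$ (i, sm ! (c - blk_off J m)) * x $ c else 0))"
    using a H i off1 unfolding M_mat_def Let_def
    by (intro sum.cong) (auto simp: N_def m_def i_def s0_def sm_def col_sub_def blk_off_Suc)
  also have "\<dots> = - (\<Sum>t<card (J 0). H $$ (i, s0 ! t) * x $ t)
      + (\<Sum>c\<in>{blk_off J m..<blk_off J (Suc m)}. H $$ (i, sm ! (c - blk_off J m)) * x $ c)"
  proof -
    have "{..<N} \<inter> {c. c < card (J 0)} = {..<card (J 0)}"
      "{..<N} \<inter> {c. c \<in> {blk_off J m..<blk_off J (Suc m)}} = {blk_off J m..<blk_off J (Suc m)}"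
      using off1 offN by auto
    then show ?thesis
      by (simp add: sum.distrib sum.If_cases sum_negf)
  qed
  also have "(\<Sum>c\<in>{blk_off J m..<blk_off J (Suc m)}. H $$ (i, sm ! (c - blk_off J m)) * x $ c)
      = (\<Sum>t<card (J m). H $$ (i, sm ! t) * x $ (blk_off J m + t))"
    by (rule sum.reindex_bij_witness[of _ "\<lambda>t. blk_off J m + t" "\<lambda>c. c - blk_off J m"])
      (auto simp: blk_off_Suc)
  finally show ?thesis
    using mult_mat_vec_unpack_nth[OF H _ i] J mL by (simp add: s0_def sm_def)
qed

lemma M_mat_mult_vec_eq_0_iff:
  assumes H: "H \<in> carrier_mat r n" and J: "\<forall>m\<le>L. J m \<subseteq> {0..<n}"
    and x: "x \<in> carrier_vec (blk_off J (Suc L))"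
  shows "M_mat H L J *\<^sub>v x = 0\<^sub>v (L * r)
    \<longleftrightarrow> (\<forall>m\<in>{1..L}. H *\<^sub>v unpack n (J m) (blk_off J m) x = H *\<^sub>v unpack n (J 0) 0 x)"
proof -
  let ?u = "\<lambda>m. H *\<^sub>v unpack n (J m) (blk_off J m) x"
  have "M_mat H L J *\<^sub>v x = 0\<^sub>v (L * r) \<longleftrightarrow> (\<forall>m\<in>{1..L}. ?u m = ?u 0)"
  proof
    assume Mx: "M_mat H L J *\<^sub>v x = 0\<^sub>v (L * r)"
    show "\<forall>m\<in>{1..L}. ?u m = ?u 0"
    proof (intro ballI eq_vecI)
      fix m i assume m: "m \<in> {1..L}" and "i < dim_vec (?u 0)"
      then have i: "i < r"
        using H by simp
      define a where "a = (m - 1) * r + i"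
      have a: "a div r + 1 = m" "a mod r = i"
        using i m by (simp_all add: a_def)
      have "a < (m - 1) * r + r"
        using i by (simp add: a_def)
      also have "\<dots> \<le> L * r"
        using m mult_le_mono1[of m L r] by (cases m) auto
      finally show "?u m $ i = ?u 0 $ i"
        using M_mat_mult_vec_nth[OF H J x, of a] Mx a by simp
    qed (use H in simp)
  next
    assume u: "\<forall>m\<in>{1..L}. ?u m = ?u 0"
    show "M_mat H L J *\<^sub>v x = 0\<^sub>v (L * r)"
    proof (rule eq_vecI)
      fix a assume "a < dim_vec (0\<^sub>v (L * r) :: 'a vec)"
      then have a: "a < L * r"
        by simp
      then have "a div r + 1 \<in> {1..L}"
        by (auto simp: less_mult_imp_div_less Suc_le_eq)
      then show "(M_mat H L J *\<^sub>v x) $ a = 0\<^sub>v (L * r) $ a"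
        using M_mat_mult_vec_nth[OF H J x a] u a by simp
    qed (use H in \<open>simp add: M_mat_def\<close>)
  qed
  then show ?thesis
    by simp
qed

subsection \<open>Enlarging disjoint supports\<close>

lemma disjoint_family_grow:
  assumes U: "finite U" and S: "\<forall>m\<le>L. S m \<subseteq> U" "disjoint_family_on S {..L}"
    and small: "\<forall>m\<le>L. card (S m) \<le> r"
    and room: "(\<Sum>m\<le>L. card (S m)) < card U" "(\<Sum>m\<le>L. card (S m)) < (L + 1) * r"
  shows "\<exists>S'. (\<forall>m\<le>L. S m \<subseteq> S' m \<and> S' m \<subseteq> U \<and> card (S' m) \<le> r)
    \<and> disjoint_family_on S' {..L} \<and> (\<Sum>m\<le>L. card (S' m)) = Suc (\<Sum>m\<le>L. card (S m))"
proof -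
  have fin: "finite (S m)" if "m \<le> L" for m
    using S(1) U that finite_subset by blast
  have "card (\<Union>m\<le>L. S m) = (\<Sum>m\<le>L. card (S m))"
    using fin S(2) by (intro card_UN_disjoint) (auto simp: disjoint_family_on_def)
  then have "\<not> U \<subseteq> (\<Union>m\<le>L. S m)"
    using room(1) card_mono[of "\<Union>m\<le>L. S m" U] fin by auto
  then obtain j where j: "j \<in> U" "\<forall>m\<le>L. j \<notin> S m"
    by blast
  have "\<not> (\<forall>m\<le>L. r \<le> card (S m))"
    using room(2) sum_mono[of "{..L}" "\<lambda>_. r" "\<lambda>m. card (S m)"] by auto
  then obtain m0 where m0: "m0 \<le> L" "card (S m0) < r"
    by (auto simp: not_le)
  define S' where "S' = S(m0 := insert j (S m0))"
  have card_S': "card (S' m) = card (S m) + (if m = m0 then 1 else 0)" if "m \<le> L" for m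
    using j fin that m0 by (auto simp: S'_def)
  have "(\<Sum>m\<le>L. card (S' m)) = (\<Sum>m\<le>L. card (S m)) + (\<Sum>m\<le>L. if m = m0 then 1 else 0)"
    using card_S' by (simp add: sum.distrib[symmetric])
  moreover have "disjoint_family_on S' {..L}"
    using S(2) j m0 by (auto simp: S'_def disjoint_family_on_def)
  moreover have "\<forall>m\<le>L. S m \<subseteq> S' m \<and> S' m \<subseteq> U \<and> card (S' m) \<le> r"
    using S(1) small j m0 card_S' by (auto simp: S'_def)
  ultimately show ?thesis
    using m0 by (intro exI[of _ S']) simp
qed

lemma exists_disjoint_supersets:
  assumes "finite U" "\<forall>m\<le>L. S m \<subseteq> U" "disjoint_family_on S {..L}"
    "\<forall>m\<le>L. card (S m) \<le> r" "(\<Sum>m\<le>L. card (S m)) \<le> T" "T \<le> card U" "T \<le> (L + 1) * r"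
  shows "\<exists>J. (\<forall>m\<le>L. S m \<subseteq> J m \<and> J m \<subseteq> U \<and> card (J m) \<le> r)
    \<and> disjoint_family_on J {..L} \<and> (\<Sum>m\<le>L. card (J m)) = T"
  using assms(2-5)
proof (induction "T - (\<Sum>m\<le>L. card (S m))" arbitrary: S)
  case 0
  then show ?case
    by (intro exI[of _ S]) auto
next
  case (Suc d)
  obtain S' where S': "\<forall>m\<le>L. S m \<subseteq> S' m \<and> S' m \<subseteq> U \<and> card (S' m) \<le> r"
    "disjoint_family_on S' {..L}" "(\<Sum>m\<le>L. card (S' m)) = Suc (\<Sum>m\<le>L. card (S m))"
  proof -
    have "(\<Sum>m\<le>L. card (S m)) < T"
      using Suc.hyps(2) by linarith
    then show ?thesis
      using disjoint_family_grow[of U L S r] that Suc.prems assms(1,6,7) by auto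
  qed
  have "\<exists>J. (\<forall>m\<le>L. S' m \<subseteq> J m \<and> J m \<subseteq> U \<and> card (J m) \<le> r)
    \<and> disjoint_family_on J {..L} \<and> (\<Sum>m\<le>L. card (J m)) = T"
  proof (rule Suc.hyps(1))
    show "d = T - (\<Sum>m\<le>L. card (S' m))" "(\<Sum>m\<le>L. card (S' m)) \<le> T"
      using S'(3) Suc.hyps(2) by simp_all
  qed (use S'(1,2) in auto)
  then obtain J where "\<forall>m\<le>L. S' m \<subseteq> J m \<and> J m \<subseteq> U \<and> card (J m) \<le> r"
    "disjoint_family_on J {..L}" "(\<Sum>m\<le>L. card (J m)) = T"
    by blast
  then show ?case
    using S'(1) by (intro exI[of _ J]) blast
qed

lemma hweight_le: "hweight n v \<le> n"
  unfolding hweight_def supp_def by (rule card_mono[of "{..<n}", simplified]) auto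

lemma min_dist_le_hweight:
  assumes "c \<in> C" "c \<noteq> 0\<^sub>v n"
  shows "min_dist n C \<le> hweight n c"
proof -
  have "finite {hweight n c | c. c \<in> C \<and> c \<noteq> 0\<^sub>v n}"
    by (rule finite_subset[of _ "{..n}"]) (auto simp: hweight_le)
  then show ?thesis
    unfolding min_dist_def using assms by (intro Min_le) auto
qed

lemma minus_vec_eq_0_iff:
  assumes "(u :: 'a :: ab_group_add vec) \<in> carrier_vec n" "v \<in> carrier_vec n"
  shows "u - v = 0\<^sub>v n \<longleftrightarrow> u = v"
proof
  assume "u - v = 0\<^sub>v n"
  then show "u = v"
    using assms by (intro eq_vecI) (metis carrier_vecD eq_iff_diff_eq_0 index_minus_vec(1) index_zero_vec(1))+
qed (use assms in simp)

lemma diff_mem_code_of_iff: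
  assumes "H \<in> carrier_mat r n" "u \<in> carrier_vec n" "v \<in> carrier_vec n"
  shows "u - v \<in> code_of n H \<longleftrightarrow> H *\<^sub>v u = H *\<^sub>v v"
proof -
  have "H *\<^sub>v (u - v) = H *\<^sub>v u - H *\<^sub>v v"
    using assms by (rule mult_minus_distrib_mat_vec)
  moreover have "H *\<^sub>v u - H *\<^sub>v v = 0\<^sub>v r \<longleftrightarrow> H *\<^sub>v u = H *\<^sub>v v"
    using assms by (intro minus_vec_eq_0_iff) auto
  ultimately show ?thesis
    using assms by (simp add: code_of_def)
qed

lemma coset_members_nonzero:
  assumes H: "H \<in> carrier_mat r n"
    and e: "\<forall>m\<le>L. e m \<in> carrier_vec n \<and> hweight n (e m) < min_dist n (code_of n H)
      \<and> H *\<^sub>v e m = H *\<^sub>v e 0"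
    and nonzero: "m0 \<le> L" "e m0 \<noteq> 0\<^sub>v n" and m: "m \<le> L"
  shows "e m \<noteq> 0\<^sub>v n"
proof
  assume "e m = 0\<^sub>v n"
  moreover have "H *\<^sub>v 0\<^sub>v n = 0\<^sub>v r"
    using H by auto
  ultimately have "H *\<^sub>v e m0 = 0\<^sub>v r"
    using e m nonzero(1) by metis
  then have "e m0 \<in> code_of n H"
    using e nonzero(1) H by (simp add: code_of_def)
  then show False
    using min_dist_le_hweight[of "e m0"] e nonzero by (meson not_le)
qed

subsection \<open>Light coset lists and singular block matrices\<close>

definition light_coset_list ::
  "nat \<Rightarrow> 'a::field vec set \<Rightarrow> real \<Rightarrow> nat \<Rightarrow> (nat \<Rightarrow> 'a vec) \<Rightarrow> bool" where
  "light_coset_list n C \<tau> L e \<longleftrightarrow>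
     (\<forall>m\<le>L. e m \<in> carrier_vec n \<and> e m \<noteq> 0\<^sub>v n
             \<and> hweight n (e m) \<le> min_dist n C - 1 \<and> e m - e 0 \<in> C)
   \<and> (\<forall>m\<le>L. \<forall>m'\<le>L. m \<noteq> m' \<longrightarrow> supp n (e m) \<inter> supp n (e m') = {})
   \<and> real (\<Sum>m\<le>L. hweight n (e m)) \<le> real (L + 1) * \<tau>"

lemma lightly_list_decodable_iff:
  "lightly_list_decodable n C \<tau> L \<longleftrightarrow> \<not> (\<exists>e. light_coset_list n C \<tau> L e)"
  by (simp add: lightly_list_decodable_def light_coset_list_def)

definition admissible_blocks :: "nat \<Rightarrow> nat \<Rightarrow> nat \<Rightarrow> (nat \<Rightarrow> nat set) \<Rightarrow> bool" where
  "admissible_blocks n r L J \<longleftrightarrow> (\<forall>m\<le>L. J m \<subseteq> {0..<n}) \<and> disjoint_family_on J {..L}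
     \<and> (\<forall>m\<le>L. card (J m) \<le> r) \<and> (\<Sum>m\<le>L. card (J m)) = L * r"

lemma light_coset_list_if_singular_M_mat:
  assumes H: "H \<in> carrier_mat r n" and d: "min_dist n (code_of n H) = r + 1"
    and \<tau>: "real (L + 1) * \<tau> = real (L * r)"
    and J: "admissible_blocks n r L J" and singular: "det (M_mat H L J) = 0"
  shows "\<exists>e. light_coset_list n (code_of n H) \<tau> L e"
proof -
  have Jn: "\<forall>m\<le>L. J m \<subseteq> {0..<n}" and size: "blk_off J (Suc L) = L * r"
    using J by (simp_all add: admissible_blocks_def blk_off_Suc_eq_sum)
  obtain x where x: "x \<in> carrier_vec (L * r)" "x \<noteq> 0\<^sub>v (L * r)" "M_mat H L J *\<^sub>v x = 0\<^sub>v (L * r)"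
    using det_0_iff_vec_prod_zero_field M_mat_carrier[OF H, of L J] singular size by auto
  define e where "e m = unpack n (J m) (blk_off J m) x" for m
  have coset: "H *\<^sub>v e m = H *\<^sub>v e 0" if "m \<le> L" for m
    using M_mat_mult_vec_eq_0_iff[OF H Jn, of x] x size that by (cases m) (auto simp: e_def)
  have weight: "hweight n (e m) \<le> card (J m)" "card (J m) \<le> r" if "m \<le> L" for m
    using J that hweight_unpack_le[of "J m" n] by (auto simp: admissible_blocks_def e_def)
  obtain m0 where m0: "m0 \<le> L" "e m0 \<noteq> 0\<^sub>v n"
    using eq_0_iff_unpack_blocks_eq_0[OF Jn, of x] x size by (auto simp: e_def)
  have carrier: "e m \<in> carrier_vec n" for m
    by (simp add: e_def)
  have light: "hweight n (e m) \<le> min_dist n (code_of n H) - 1" if "m \<le> L" for m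
    using weight[OF that] d by simp
  have "hweight n (e m) < min_dist n (code_of n H)" if "m \<le> L" for m
    using weight[OF that] d by linarith
  then have "\<forall>m\<le>L. e m \<in> carrier_vec n \<and> hweight n (e m) < min_dist n (code_of n H)
      \<and> H *\<^sub>v e m = H *\<^sub>v e 0"
    using carrier coset by blast
  then have nonzero: "e m \<noteq> 0\<^sub>v n" if "m \<le> L" for m
    using coset_members_nonzero[of H r n L e m0] H m0 that by blast
  have supp_J: "supp n (e m) \<subseteq> J m" if "m \<le> L" for m
    using Jn that supp_unpack[of "J m" n] by (simp add: e_def)
  have "supp n (e m) \<inter> supp n (e m') = {}" if "m \<le> L" "m' \<le> L" "m \<noteq> m'" for m m'
    using J supp_J[OF that(1)] supp_J[OF that(2)] that
    unfolding admissible_blocks_def disjoint_family_on_def by blast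
  moreover have "real (\<Sum>m\<le>L. hweight n (e m)) \<le> real (L + 1) * \<tau>"
  proof -
    have "(\<Sum>m\<le>L. hweight n (e m)) \<le> L * r"
      using sum_mono[of "{..L}" "\<lambda>m. hweight n (e m)" "\<lambda>m. card (J m)"] weight J
      by (auto simp: admissible_blocks_def)
    then show ?thesis
      unfolding \<tau> by (simp only: of_nat_le_iff)
  qed
  moreover have "e m - e 0 \<in> code_of n H" if "m \<le> L" for m
    using diff_mem_code_of_iff[OF H carrier carrier] coset that by blast
  ultimately have "light_coset_list n (code_of n H) \<tau> L e"
    unfolding light_coset_list_def using carrier nonzero light by auto
  then show ?thesis
    by blast
qed

lemma singular_M_mat_if_light_coset_list:
  assumes H: "H \<in> carrier_mat r n" and d: "min_dist n (code_of n H) = r + 1"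
    and \<tau>: "real (L + 1) * \<tau> = real (L * r)" and rate: "L * r \<le> n"
    and e: "light_coset_list n (code_of n H) \<tau> L e"
  shows "\<exists>J. admissible_blocks n r L J \<and> det (M_mat H L J) = 0"
proof -
  have e_m: "\<forall>m\<le>L. e m \<in> carrier_vec n \<and> e m \<noteq> 0\<^sub>v n \<and> card (supp n (e m)) \<le> r
      \<and> e m - e 0 \<in> code_of n H"
    using e d by (simp add: light_coset_list_def hweight_def)
  have "disjoint_family_on (\<lambda>m. supp n (e m)) {..L}"
    using e by (auto simp: light_coset_list_def disjoint_family_on_def)
  moreover have "(\<Sum>m\<le>L. card (supp n (e m))) \<le> L * r"
    using e \<tau> unfolding light_coset_list_def hweight_def by linarith
  ultimately have "\<exists>J. (\<forall>m\<le>L. supp n (e m) \<subseteq> J m \<and> J m \<subseteq> {0..<n} \<and> card (J m) \<le> r)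
    \<and> disjoint_family_on J {..L} \<and> (\<Sum>m\<le>L. card (J m)) = L * r"
    using e_m rate supp_subset by (intro exists_disjoint_supersets) auto
  then obtain J where J: "\<forall>m\<le>L. supp n (e m) \<subseteq> J m \<and> J m \<subseteq> {0..<n} \<and> card (J m) \<le> r"
    "disjoint_family_on J {..L}" "(\<Sum>m\<le>L. card (J m)) = L * r"
    by blast
  then have adm: "admissible_blocks n r L J"
    by (simp add: admissible_blocks_def)
  have Jn: "\<forall>m\<le>L. J m \<subseteq> {0..<n}"
    using J by simp
  define x where "x = pack L J e"
  have x: "x \<in> carrier_vec (blk_off J (Suc L))" "blk_off J (Suc L) = L * r"
    using J(3) by (simp add: x_def, simp add: blk_off_Suc_eq_sum)
  have blocks: "unpack n (J m) (blk_off J m) x = e m" if "m \<le> L" for m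
    using unpack_pack[of m L J n e] that J e_m by (simp add: x_def)
  have coset: "H *\<^sub>v e m = H *\<^sub>v e 0" if "m \<le> L" for m
    using e_m diff_mem_code_of_iff[OF H] that by blast
  have "H *\<^sub>v unpack n (J m) (blk_off J m) x = H *\<^sub>v unpack n (J 0) 0 x" if "m \<le> L" for m
    using blocks[OF that] blocks[of 0] coset[OF that] by simp
  then have "\<forall>m\<in>{1..L}. H *\<^sub>v unpack n (J m) (blk_off J m) x = H *\<^sub>v unpack n (J 0) 0 x"
    by simp
  then have "M_mat H L J *\<^sub>v x = 0\<^sub>v (L * r)"
    using M_mat_mult_vec_eq_0_iff[OF H Jn x(1)] by blast
  moreover have "x \<noteq> 0\<^sub>v (L * r)"
    using eq_0_iff_unpack_blocks_eq_0[OF Jn x(1)] blocks[of 0] e_m x(2) by auto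
  ultimately have "det (M_mat H L J) = 0"
    using det_0_iff_vec_prod_zero_field M_mat_carrier[OF H, of L J] x by auto
  then show ?thesis
    using adm by blast
qed

lemma rate_bound_imp_redundancy_le:
  assumes "0 < L" "k \<le> n" "0 < n" and rate: "real k / real n \<ge> 1 - 1 / real L"
  shows "L * (n - k) \<le> n"
proof -
  have "real n * (real L - 1) \<le> real L * real k"
    using rate assms(1,3) by (simp add: field_simps)
  then have "real (L * (n - k)) \<le> real n"
    using assms(2) by (simp add: of_nat_diff algebra_simps)
  then show ?thesis
    by linarith
qed

theorem mainTheorem13:
  fixes H :: "'a::{finite, field} mat" and C :: "'a vec set"
    and n k L :: nat
  assumes "L \<ge> 1"
    and "k < n"
    and "real k / real n \<ge> 1 - 1 / real L"
    and "parity_check n k H C"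
    and "is_MDS n k C"
  shows "lightly_L_MDS n k C L \<longleftrightarrow>
    (\<forall>J :: nat \<Rightarrow> nat set.
       (\<forall>m\<le>L. J m \<subseteq> {0..<n})
     \<and> (\<forall>m\<le>L. \<forall>m'\<le>L. m \<noteq> m' \<longrightarrow> J m \<inter> J m' = {})
     \<and> (\<forall>m\<le>L. card (J m) \<le> n - k)
     \<and> (\<Sum>m\<le>L. card (J m)) = L * (n - k)
     \<longrightarrow> det (M_mat H L J) \<noteq> 0)"
proof -
  define r where "r = n - k"
  have H: "H \<in> carrier_mat r n" and C: "C = code_of n H"
    using assms(4) by (auto simp: parity_check_def r_def)
  have d: "min_dist n (code_of n H) = r + 1"
    using assms(5) C by (simp add: is_MDS_def r_def)
  have \<tau>: "real (L + 1) * (real L * real (n - k) / real (L + 1)) = real (L * r)"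
    by (simp add: r_def)
  have rate: "L * r \<le> n"
    using rate_bound_imp_redundancy_le assms(1-3) by (simp add: r_def)
  have "lightly_L_MDS n k C L
      \<longleftrightarrow> \<not> (\<exists>e. light_coset_list n (code_of n H) (real L * real (n - k) / real (L + 1)) L e)"
    by (simp add: lightly_L_MDS_def lightly_list_decodable_iff C)
  also have "\<dots> \<longleftrightarrow> (\<forall>J. admissible_blocks n r L J \<longrightarrow> det (M_mat H L J) \<noteq> 0)"
    using light_coset_list_if_singular_M_mat[OF H d \<tau>]
      singular_M_mat_if_light_coset_list[OF H d \<tau> rate] by blast
  finally show ?thesis
    unfolding admissible_blocks_def disjoint_family_on_def r_def by (simp add: Ball_def)
qed

end
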